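(* Let $\alpha\in\mathbb{N}$ and consider the generalized Good–Turing estimator $M^{\mathrm{GT}}_{0,\alpha}(X^n)=\phi_\alpha(X^n)/\binom{n}{\alpha}$. Its worst-case squared-error risk $$R_{n,\alpha}(M^{\mathrm{GT}}_{0,\alpha})=\sup_P E_{X^n\sim P}\big[(M^{\mathrm{GT}}_{0,\alpha}(X^n)-M_{0,\alpha}(X^n,P))^2\big],$$ with the supremum over all discrete distributions $P$, satisfies $$R_{n,\alpha}(M^{\mathrm{GT}}_{0,\alpha})\le O\big(1/n^{2\alpha-1}\big)+o\big(1/n^{2\alpha-1}\big)\quad\text{as } n\to\infty.$$
   Context: $P$ is a discrete probability distribution on a countable alphabet $\mathcal{X}$, $p_x=P(x)$, and $X^n=(X_1,\ldots,X_n)$ are i.i.d. samples from $P$. $F_x(X^n)=\sum_{i=1}^n I(X_i=x)$ is the number of occurrences of $x$ in $X^n$, $I(\cdot)$ is the indicator, $\phi_l(X^n)=\sum_{x\in\mathcal{X}}I(F_x(X^n)=l)$ is the number of letters appearing exactly $l$ times, and $M_{0,\alpha}(X^n,P)=\sum_{x\in\mathcal{X}}p_x^{\alpha}I(F_x(X^n)=0)$ is the order-$\alpha$ missing mass. *)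

theory Defs
  imports "HOL-Probability.Probability"
begin

text \<open>An i.i.d. sample X^n = (X_1,...,X_n) from P, encoded as a function on
  indices {0..<n} (value undefined outside).\<close>
definition sample_pmf :: "'a pmf \<Rightarrow> nat \<Rightarrow> (nat \<Rightarrow> 'a) pmf" where
  "sample_pmf P n = Pi_pmf {..<n} undefined (\<lambda>_. P)"

definition occ :: "nat \<Rightarrow> (nat \<Rightarrow> 'a) \<Rightarrow> 'a \<Rightarrow> nat" where
  "occ n xs x = card {i \<in> {..<n}. xs i = x}"

definition prevalence :: "nat \<Rightarrow> (nat \<Rightarrow> 'a) \<Rightarrow> nat \<Rightarrow> nat" where
  "prevalence n xs l = card {x. occ n xs x = l}"

definition missing_mass :: "nat \<Rightarrow> nat \<Rightarrow> (nat \<Rightarrow> 'a) \<Rightarrow> 'a pmf \<Rightarrow> real" where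
  "missing_mass \<alpha> n xs P = (\<Sum>\<^sub>\<infinity>x. pmf P x ^ \<alpha> * (if occ n xs x = 0 then 1 else 0))"

definition GT_est :: "nat \<Rightarrow> nat \<Rightarrow> (nat \<Rightarrow> 'a) \<Rightarrow> real" where
  "GT_est \<alpha> n xs = real (prevalence n xs \<alpha>) / real (n choose \<alpha>)"

text \<open>Worst-case squared-error risk (sup over all discrete distributions on 'a),
  valued in the extended non-negative reals so the supremum is always meaningful.\<close>
definition GT_risk :: "'a itself \<Rightarrow> nat \<Rightarrow> nat \<Rightarrow> ennreal" where
  "GT_risk _ \<alpha> n = (SUP P::'a pmf. \<integral>\<^sup>+ xs. ennreal ((GT_est \<alpha> n xs - missing_mass \<alpha> n xs P)\<^sup>2)
        \<partial>measure_pmf (sample_pmf P n))"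

end

theory Submission
  imports Defs
begin

(* Write the estimator and the missing mass as sums over letters, GT = sum_x u_x and
  M = sum_x v_x with u_x = [F_x = alpha] / C(n, alpha) and v_x = p_x^alpha [F_x = 0]. Then
  E (GT - M)^2 = sum_{x,y} E (u_x u_y + v_x v_y - u_x v_y - v_x u_y), and each summand is a
  combination of binomial and trinomial probabilities. For x = y it equals
  p^alpha (1-p)^(n-alpha) / C(n, alpha) + p^(2 alpha) (1-p)^n with p = p_x. For x <> y it is
  at most p^alpha q^alpha r^m (1 - r^alpha)^2, where q = p_y, r = 1-p-q and m = n - 2 alpha,
  and Bernoulli's inequality bounds this by alpha^2 p^alpha q^alpha (p+q)^2 ((1-p)(1-q))^m.
  As t^j (1-t)^m <= (j/m)^j, the two kinds of summands are O(n^-(2 alpha-1)) times p_x and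
  times p_x p_y respectively, uniformly in P, so their double sum is O(n^-(2 alpha-1)).
  Working in ennreal avoids all summability conditions. *)


lemma power_mult_one_minus_power_le:
  fixes t :: real
  assumes "0 \<le> t" "t \<le> 1" "m > 0"
  shows "t ^ j * (1 - t) ^ m \<le> (real j / real m) ^ j"
proof (cases "j = 0")
  case False
  define u where "u = t * m / j"
  have "u \<le> exp u" using exp_ge_add_one_self[of u] by linarith
  then have "u * exp (- u) \<le> 1" by (simp add: exp_minus field_simps)
  then have "(j / m) * (u * exp (- u)) \<le> j / m"
    using assms by (intro mult_left_le) (auto simp: u_def)
  then have t_exp: "t * exp (- u) \<le> j / m"
    using False assms by (simp add: u_def)
  have "(1 - t) ^ m \<le> exp (- t) ^ m"
    using assms by (intro power_mono) (auto simp: exp_ge_add_one_self[of "-t", simplified])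
  also have "\<dots> = exp (- u) ^ j"
    using False by (simp add: u_def flip: exp_of_nat_mult)
  finally have "t ^ j * (1 - t) ^ m \<le> (t * exp (- u)) ^ j"
    using assms by (simp add: power_mult_distrib mult_left_mono)
  also have "\<dots> \<le> (j / m) ^ j"
    using t_exp assms by (intro power_mono) auto
  finally show ?thesis .
qed (use assms in \<open>simp add: power_le_one\<close>)

definition peak_bound :: "nat \<Rightarrow> nat \<Rightarrow> real" where
  "peak_bound n j = (2 * real j / real n) ^ j"

lemma power_mult_one_minus_power_le_peak_bound:
  fixes t :: real
  assumes "0 \<le> t" "t \<le> 1" "0 < n" "n \<le> 2 * m"
  shows "t ^ j * (1 - t) ^ m \<le> peak_bound n j"
proof -
  have "t ^ j * (1 - t) ^ m \<le> (real j / real m) ^ j"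
    using assms by (intro power_mult_one_minus_power_le) auto
  also have "\<dots> \<le> peak_bound n j"
    unfolding peak_bound_def using assms
    by (intro power_mono) (auto simp: field_simps intro!: mult_left_mono)
  finally show ?thesis .
qed

lemma one_minus_power_sq_le:
  fixes p q :: real
  assumes "0 \<le> p" "0 \<le> q" "p + q \<le> 1"
  shows "(1 - p - q) ^ m * (1 - (1 - p - q) ^ k)\<^sup>2 \<le> (k * (p + q))\<^sup>2 * ((1 - p) * (1 - q)) ^ m"
proof -
  define r where "r = 1 - p - q"
  have r: "0 \<le> r" "r \<le> 1" using assms by (auto simp: r_def)
  have "1 + real k * (r - 1) \<le> r ^ k"
    using Bernoulli_inequality[of "r - 1" k] r by simp
  then have "1 - r ^ k \<le> k * (p + q)" by (simp add: r_def algebra_simps)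
  moreover have "0 \<le> 1 - r ^ k" using r by (simp add: power_le_one)
  ultimately have "(1 - r ^ k)\<^sup>2 \<le> (k * (p + q))\<^sup>2" by (intro power_mono)
  moreover have "r ^ m \<le> ((1 - p) * (1 - q)) ^ m"
    using r assms by (intro power_mono) (auto simp: r_def algebra_simps)
  ultimately have "r ^ m * (1 - r ^ k)\<^sup>2 \<le> ((1 - p) * (1 - q)) ^ m * (k * (p + q))\<^sup>2"
    using r assms by (intro mult_mono) auto
  then show ?thesis
    by (simp add: r_def mult.commute)
qed

lemma power_pair_sum_sq_le:
  fixes p q B1 B3 :: real
  assumes "0 \<le> p" "p \<le> 1" "0 \<le> q" "q \<le> 1"
    and B1: "\<And>t. 0 \<le> t \<Longrightarrow> t \<le> 1 \<Longrightarrow> t ^ k * (1 - t) ^ m \<le> B1"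
    and B3: "\<And>t. 0 \<le> t \<Longrightarrow> t \<le> 1 \<Longrightarrow> t ^ (k + 2) * (1 - t) ^ m \<le> B3"
  shows "p ^ Suc k * q ^ Suc k * (p + q)\<^sup>2 * ((1 - p) * (1 - q)) ^ m \<le> 4 * B1 * B3 * p * q"
proof -
  define a b where "a = p ^ k * (1 - p) ^ m" and "b = q ^ k * (1 - q) ^ m"
  have ab: "0 \<le> a" "0 \<le> b" "a \<le> B1" "b \<le> B1" "a * p\<^sup>2 \<le> B3" "b * q\<^sup>2 \<le> B3"
    using assms B1 B3 by (auto simp: a_def b_def power_add power2_eq_square mult_ac)
  have "(p + q)\<^sup>2 \<le> 2 * p\<^sup>2 + 2 * q\<^sup>2"
    using zero_le_power2[of "p - q"] by (simp add: power2_eq_square algebra_simps)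
  then have "a * b * (p + q)\<^sup>2 \<le> a * b * (2 * p\<^sup>2 + 2 * q\<^sup>2)"
    using ab by (intro mult_left_mono) auto
  also have "\<dots> = 2 * ((a * p\<^sup>2) * b + a * (b * q\<^sup>2))"
    by (simp add: algebra_simps)
  also have "\<dots> \<le> 2 * (B3 * B1 + B1 * B3)"
    using ab order_trans[OF _ ab(5)] by (intro mult_left_mono add_mono mult_mono) auto
  finally have "p * q * (a * b * (p + q)\<^sup>2) \<le> p * q * (4 * B1 * B3)"
    using assms by (intro mult_left_mono) auto
  then show ?thesis
    by (simp add: a_def b_def power_mult_distrib mult_ac)
qed


section \<open>Occupancy probabilities\<close>

definition occ_set :: "nat \<Rightarrow> (nat \<Rightarrow> 'a) \<Rightarrow> 'a \<Rightarrow> nat set" where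
  "occ_set n xs x = {i \<in> {..<n}. xs i = x}"

lemma occ_conv_card_occ_set: "occ n xs x = card (occ_set n xs x)"
  by (simp add: occ_def occ_set_def)

lemma prod_lessThan_three_cases:
  assumes "S \<subseteq> {..<n}" "T \<subseteq> {..<n}" "S \<inter> T = {}"
  shows "(\<Prod>i<n. if i \<in> S then u else if i \<in> T then v else w)
           = u ^ card S * v ^ card T * (w :: 'b :: comm_monoid_mult) ^ (n - card S - card T)"
proof -
  define R where "R = {..<n} - (S \<union> T)"
  let ?g = "\<lambda>i. if i \<in> S then u else if i \<in> T then v else w"
  have fin: "finite S" "finite T" "finite R"
    using assms by (auto simp: R_def intro: finite_subset[OF _ finite_lessThan])
  have "{..<n} = (S \<union> T) \<union> R" "(S \<union> T) \<inter> R = {}"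
    using assms by (auto simp: R_def)
  then have "(\<Prod>i<n. ?g i) = (\<Prod>i\<in>S. ?g i) * (\<Prod>i\<in>T. ?g i) * (\<Prod>i\<in>R. ?g i)"
    using fin assms(3) by (simp only: prod.union_disjoint finite_Un)
  also have "\<dots> = (\<Prod>i\<in>S. u) * (\<Prod>i\<in>T. v) * (\<Prod>i\<in>R. w)"
    using assms(3) by (intro arg_cong2[where f = times] prod.cong) (auto simp: R_def)
  moreover have "card R = n - card S - card T"
    using assms fin by (simp add: R_def card_Diff_subset card_Un_disjoint)
  ultimately show ?thesis
    by simp
qed

lemma prob_sample_pmf_Pi:
  "measure_pmf.prob (sample_pmf P n) {xs. \<forall>i<n. xs i \<in> G i} = (\<Prod>i<n. measure_pmf.prob P (G i))"
proof -
  have "{xs. \<forall>i<n. xs i \<in> G i} = Pi {..<n} G" by (auto simp: Pi_def)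
  then show ?thesis by (simp add: sample_pmf_def measure_Pi_pmf_Pi)
qed

lemma prob_vimage_finite_eq_sum:
  assumes "finite D"
  shows "measure_pmf.prob Q {\<omega>. f \<omega> \<in> D} = (\<Sum>z\<in>D. measure_pmf.prob Q {\<omega>. f \<omega> = z})"
proof -
  have "{\<omega>. f \<omega> \<in> D} = (\<Union>z\<in>D. {\<omega>. f \<omega> = z})" by auto
  then show ?thesis
    using assms
    by (auto intro!: measure_pmf.finite_measure_finite_Union simp: disjoint_family_on_def)
qed

lemma prob_occ_set_eq:
  assumes "S \<subseteq> {..<n}"
  shows "measure_pmf.prob (sample_pmf P n) {xs. occ_set n xs x = S}
           = pmf P x ^ card S * (1 - pmf P x) ^ (n - card S)"
proof -
  \<comment> \<open>the void middle case lets \<open>prod_lessThan_three_cases\<close> apply with \<open>T = {}\<close>\<close>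
  let ?G = "\<lambda>i. if i \<in> S then {x} else if i \<in> {} then {} else - {x}"
  have "{xs. occ_set n xs x = S} = {xs. \<forall>i<n. xs i \<in> ?G i}"
    using assms by (auto simp: occ_set_def)
  moreover have "measure_pmf.prob P (?G i)
      = (if i \<in> S then pmf P x else if i \<in> {} then 0 else 1 - pmf P x)" for i
    using measure_pmf.prob_compl[of "{x}" P] by (simp add: measure_pmf_single Compl_eq_Diff_UNIV)
  ultimately show ?thesis
    using assms by (simp add: prob_sample_pmf_Pi prod_lessThan_three_cases)
qed

lemma prob_occ_set_pair_eq:
  assumes "x \<noteq> y" "S \<subseteq> {..<n}" "T \<subseteq> {..<n}" "S \<inter> T = {}"
  shows "measure_pmf.prob (sample_pmf P n) {xs. occ_set n xs x = S \<and> occ_set n xs y = T}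
           = pmf P x ^ card S * pmf P y ^ card T * (1 - pmf P x - pmf P y) ^ (n - card S - card T)"
proof -
  let ?G = "\<lambda>i. if i \<in> S then {x} else if i \<in> T then {y} else - {x, y}"
  have "{xs. occ_set n xs x = S \<and> occ_set n xs y = T} = {xs. \<forall>i<n. xs i \<in> ?G i}"
    using assms by (auto simp: occ_set_def)
  moreover have "measure_pmf.prob P (- {x, y}) = 1 - pmf P x - pmf P y"
    using assms(1) measure_pmf.prob_compl[of "{x, y}" P]
    by (simp add: Compl_eq_Diff_UNIV measure_measure_pmf_finite)
  then have "measure_pmf.prob P (?G i)
      = (if i \<in> S then pmf P x else if i \<in> T then pmf P y else 1 - pmf P x - pmf P y)" for i
    by (simp add: measure_pmf_single)
  ultimately show ?thesis
    using assms by (simp add: prob_sample_pmf_Pi prod_lessThan_three_cases)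
qed

lemma card_disjoint_subset_pairs:
  "card (SIGMA S:{S. S \<subseteq> {..<n} \<and> card S = a}. {T. T \<subseteq> {..<n} - S \<and> card T = b})
     = (n choose a) * ((n - a) choose b)"
proof -
  have "card {T. T \<subseteq> {..<n} - S \<and> card T = b} = (n - a) choose b"
    if "S \<subseteq> {..<n}" "card S = a" for S
  proof -
    have "card ({..<n} - S) = n - a"
      using that by (simp add: card_Diff_subset finite_subset[OF _ finite_lessThan])
    then show ?thesis using n_subsets[of "{..<n} - S" b] by simp
  qed
  then show ?thesis
    by (simp add: card_SigmaI n_subsets finite_subset)
qed

lemma prob_occ_eq:
  "measure_pmf.prob (sample_pmf P n) {xs. occ n xs x = a}
     = (n choose a) * pmf P x ^ a * (1 - pmf P x) ^ (n - a)"
proof -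
  define D where "D = {S. S \<subseteq> {..<n} \<and> card S = a}"
  have fin: "finite D" unfolding D_def by (rule finite_subset[of _ "Pow {..<n}"]) auto
  have "{xs. occ n xs x = a} = {xs. occ_set n xs x \<in> D}"
    by (auto simp: D_def occ_conv_card_occ_set occ_set_def)
  then have "measure_pmf.prob (sample_pmf P n) {xs. occ n xs x = a}
      = (\<Sum>S\<in>D. measure_pmf.prob (sample_pmf P n) {xs. occ_set n xs x = S})"
    using fin by (simp add: prob_vimage_finite_eq_sum)
  also have "\<dots> = (\<Sum>S\<in>D. pmf P x ^ a * (1 - pmf P x) ^ (n - a))"
    by (intro sum.cong) (auto simp: D_def prob_occ_set_eq)
  finally show ?thesis
    by (simp add: D_def n_subsets)
qed

lemma prob_occ_pair_eq:
  assumes "x \<noteq> y"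
  shows "measure_pmf.prob (sample_pmf P n) {xs. occ n xs x = a \<and> occ n xs y = b}
     = (n choose a) * ((n - a) choose b) * pmf P x ^ a * pmf P y ^ b
         * (1 - pmf P x - pmf P y) ^ (n - a - b)"
proof -
  define D where
    "D = (SIGMA S:{S. S \<subseteq> {..<n} \<and> card S = a}. {T. T \<subseteq> {..<n} - S \<and> card T = b})"
  have fin: "finite D"
    unfolding D_def by (rule finite_subset[of _ "Pow {..<n} \<times> Pow {..<n}"]) auto
  have "{xs. occ n xs x = a \<and> occ n xs y = b} = {xs. (occ_set n xs x, occ_set n xs y) \<in> D}"
    using assms by (auto simp: D_def occ_conv_card_occ_set occ_set_def)
  then have "measure_pmf.prob (sample_pmf P n) {xs. occ n xs x = a \<and> occ n xs y = b}
      = (\<Sum>(S, T)\<in>D. measure_pmf.prob (sample_pmf P n) {xs. occ_set n xs x = S \<and> occ_set n xs y = T})"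
    using fin by (simp add: prob_vimage_finite_eq_sum case_prod_unfold prod_eq_iff)
  also have "\<dots> = (\<Sum>(S, T)\<in>D. pmf P x ^ a * pmf P y ^ b * (1 - pmf P x - pmf P y) ^ (n - a - b))"
  proof (intro sum.cong refl, clarify)
    fix S T assume "(S, T) \<in> D"
    then have "S \<subseteq> {..<n}" "T \<subseteq> {..<n}" "S \<inter> T = {}" "card S = a" "card T = b"
      by (auto simp: D_def)
    then show "measure_pmf.prob (sample_pmf P n) {xs. occ_set n xs x = S \<and> occ_set n xs y = T}
        = pmf P x ^ a * pmf P y ^ b * (1 - pmf P x - pmf P y) ^ (n - a - b)"
      using prob_occ_set_pair_eq[OF assms] by simp
  qed
  finally show ?thesis
    by (simp add: D_def card_disjoint_subset_pairs)
qed


lemma pmf_add_pmf_le_1: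
  assumes "x \<noteq> y"
  shows "pmf P x + pmf P y \<le> 1"
proof -
  have "measure_pmf.prob P {x, y} = pmf P x + pmf P y"
    using assms by (simp add: measure_measure_pmf_finite)
  then show ?thesis
    using measure_pmf.prob_le_1[of P "{x, y}"] by simp
qed

lemma prob_occ_pair_le:
  assumes "x \<noteq> y"
  shows "measure_pmf.prob (sample_pmf P n) {xs. occ n xs x = a \<and> occ n xs y = b}
     \<le> (n choose a) * (n choose b)
         * (pmf P x ^ a * pmf P y ^ b * (1 - pmf P x - pmf P y) ^ (n - a - b))"
proof -
  have "0 \<le> pmf P x ^ a * pmf P y ^ b * (1 - pmf P x - pmf P y) ^ (n - a - b)"
    using pmf_add_pmf_le_1[OF assms, of P] by (intro mult_nonneg_nonneg zero_le_power) auto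
  then show ?thesis
    unfolding prob_occ_pair_eq[OF assms] mult.assoc
    by (auto intro!: mult_left_mono mult_right_mono simp: binomial_right_mono)
qed

section \<open>The estimator and the missing mass as sums over letters\<close>

lemma occ_pos_subset_image:
  assumes "0 < a"
  shows "{x. occ n xs x = a} \<subseteq> xs ` {..<n}"
proof
  fix x assume "x \<in> {x. occ n xs x = a}"
  then have "card {i \<in> {..<n}. xs i = x} \<noteq> 0"
    using assms by (simp add: occ_def)
  then have "{i \<in> {..<n}. xs i = x} \<noteq> {}"
    by (metis card.empty)
  then show "x \<in> xs ` {..<n}" by auto
qed

lemma finite_occ_eq: "0 < a \<Longrightarrow> finite {x. occ n xs x = a}"
  by (rule finite_subset[OF occ_pos_subset_image]) auto

lemma prevalence_le: "0 < a \<Longrightarrow> prevalence n xs a \<le> n"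
  unfolding prevalence_def
  by (metis card_image_le card_lessThan card_mono finite_imageI finite_lessThan
      occ_pos_subset_image order_trans)

definition GT_summand :: "nat \<Rightarrow> nat \<Rightarrow> (nat \<Rightarrow> 'a) \<Rightarrow> 'a \<Rightarrow> ennreal" where
  "GT_summand \<alpha> n xs x = ennreal (1 / real (n choose \<alpha>)) * of_bool (occ n xs x = \<alpha>)"

definition missing_mass_summand :: "nat \<Rightarrow> nat \<Rightarrow> (nat \<Rightarrow> 'a) \<Rightarrow> 'a pmf \<Rightarrow> 'a \<Rightarrow> ennreal" where
  "missing_mass_summand \<alpha> n xs P x = ennreal (pmf P x ^ \<alpha>) * of_bool (occ n xs x = 0)"

lemma ennreal_GT_est_eq:
  assumes "0 < \<alpha>"
  shows "ennreal (GT_est \<alpha> n xs) = (\<integral>\<^sup>+x. GT_summand \<alpha> n xs x \<partial>count_space UNIV)"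
proof -
  have "(\<integral>\<^sup>+x. of_bool (occ n xs x = \<alpha>) \<partial>count_space UNIV)
      = emeasure (count_space UNIV) {x. occ n xs x = \<alpha>}"
    by (simp add: of_bool_def indicator_def flip: nn_integral_indicator)
  also have "\<dots> = of_nat (prevalence n xs \<alpha>)"
    using emeasure_count_space_finite[OF subset_UNIV finite_occ_eq[OF assms]]
    by (simp add: prevalence_def)
  finally have "(\<integral>\<^sup>+x. GT_summand \<alpha> n xs x \<partial>count_space UNIV)
      = ennreal (1 / real (n choose \<alpha>)) * of_nat (prevalence n xs \<alpha>)"
    by (simp add: GT_summand_def nn_integral_cmult)
  also have "\<dots> = ennreal (GT_est \<alpha> n xs)"
    by (simp add: GT_est_def ennreal_of_nat_eq_real_of_nat flip: ennreal_mult')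
  finally show ?thesis ..
qed

lemma GT_est_nonneg: "0 \<le> GT_est \<alpha> n xs"
  by (simp add: GT_est_def)

lemma GT_est_le: "0 < \<alpha> \<Longrightarrow> GT_est \<alpha> n xs \<le> real n / real (n choose \<alpha>)"
  unfolding GT_est_def by (simp add: divide_right_mono prevalence_le)

lemma ennreal_missing_mass_eq:
  assumes "0 < \<alpha>"
  shows "ennreal (missing_mass \<alpha> n xs P)
           = (\<integral>\<^sup>+x. missing_mass_summand \<alpha> n xs P x \<partial>count_space UNIV)"
proof -
  define f where "f x = pmf P x ^ \<alpha> * (if occ n xs x = 0 then 1 else 0)" for x
  have "norm (f x) \<le> pmf P x" for x
    using assms power_decreasing[of 1 \<alpha> "pmf P x"] by (simp add: f_def pmf_le_1)
  then have summable: "Infinite_Set_Sum.abs_summable_on f UNIV"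
    by (rule abs_summable_on_comparison_test'[OF pmf_abs_summable])
  have "missing_mass \<alpha> n xs P = infsum f UNIV"
    by (simp add: missing_mass_def f_def[abs_def])
  also have "\<dots> = infsetsum f UNIV"
    by (simp add: infsetsum_infsum[OF summable])
  finally have "missing_mass \<alpha> n xs P = infsetsum f UNIV" .
  moreover have "(\<integral>\<^sup>+x. missing_mass_summand \<alpha> n xs P x \<partial>count_space UNIV)
      = (\<integral>\<^sup>+x. ennreal (f x) \<partial>count_space UNIV)"
    by (intro nn_integral_cong) (simp add: f_def missing_mass_summand_def)
  ultimately show ?thesis
    using nn_integral_conv_infsetsum[OF summable] by (simp add: f_def)
qed

lemma missing_mass_nonneg: "0 \<le> missing_mass \<alpha> n xs P"
  unfolding missing_mass_def by (intro infsum_nonneg) auto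

lemma missing_mass_le_1:
  assumes "0 < \<alpha>"
  shows "missing_mass \<alpha> n xs P \<le> 1"
proof -
  have "missing_mass_summand \<alpha> n xs P x \<le> ennreal (pmf P x)" for x
  proof -
    have "pmf P x ^ \<alpha> \<le> pmf P x"
      using assms power_decreasing[of 1 \<alpha> "pmf P x"] by (simp add: pmf_le_1)
    then show ?thesis
      by (cases "occ n xs x = 0") (simp_all add: missing_mass_summand_def ennreal_leI)
  qed
  then have "ennreal (missing_mass \<alpha> n xs P) \<le> (\<integral>\<^sup>+x. ennreal (pmf P x) \<partial>count_space UNIV)"
    unfolding ennreal_missing_mass_eq[OF assms] by (rule nn_integral_mono)
  also have "\<dots> = 1"
    by (simp add: nn_integral_pmf measure_pmf.emeasure_space_1)
  finally show ?thesis
    by simp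
qed


section \<open>Second moment of a difference of two random measures\<close>

lemma nn_integral_count_space_sum_products:
  "(\<integral>\<^sup>+x. \<integral>\<^sup>+y. f x * g y + h x * l y \<partial>count_space UNIV \<partial>count_space UNIV)
     = (\<integral>\<^sup>+x. f x \<partial>count_space UNIV) * (\<integral>\<^sup>+y. g y \<partial>count_space UNIV)
       + (\<integral>\<^sup>+x. h x \<partial>count_space UNIV) * (\<integral>\<^sup>+y. l y \<partial>count_space UNIV)"
  by (simp add: nn_integral_add nn_integral_cmult nn_integral_multc)

lemma ennreal_square_diff_add:
  fixes a b :: real
  assumes "0 \<le> a" "0 \<le> b"
  shows "ennreal ((a - b)\<^sup>2) + (ennreal a * ennreal b + ennreal b * ennreal a)
           = ennreal a * ennreal a + ennreal b * ennreal b"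
proof -
  have prod: "ennreal x * ennreal y = ennreal (x * y)" if "0 \<le> x" for x y
    using that by (simp add: ennreal_mult')
  have "(a - b)\<^sup>2 + (a * b + b * a) = a * a + b * b"
    by (simp add: power2_eq_square algebra_simps)
  then have "ennreal ((a - b)\<^sup>2) + (ennreal (a * b) + ennreal (b * a))
      = ennreal (a * a) + ennreal (b * b)"
    using assms by (simp flip: ennreal_plus)
  then show ?thesis
    using assms by (simp only: prod)
qed

lemma nn_integral_pmf_count_space_swap:
  fixes g :: "'b \<Rightarrow> 'a::countable \<Rightarrow> 'a \<Rightarrow> ennreal"
  shows "(\<integral>\<^sup>+\<omega>. \<integral>\<^sup>+x. \<integral>\<^sup>+y. g \<omega> x y \<partial>count_space UNIV \<partial>count_space UNIV \<partial>measure_pmf Q)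
       = (\<integral>\<^sup>+x. \<integral>\<^sup>+y. \<integral>\<^sup>+\<omega>. g \<omega> x y \<partial>measure_pmf Q \<partial>count_space UNIV \<partial>count_space UNIV)"
proof -
  have "(\<integral>\<^sup>+\<omega>. \<integral>\<^sup>+x. \<integral>\<^sup>+y. g \<omega> x y \<partial>count_space UNIV \<partial>count_space UNIV \<partial>measure_pmf Q)
       = (\<integral>\<^sup>+x. \<integral>\<^sup>+\<omega>. \<integral>\<^sup>+y. g \<omega> x y \<partial>count_space UNIV \<partial>measure_pmf Q \<partial>count_space UNIV)"
    by (rule nn_integral_count_space_nn_integral) auto
  also have "\<dots> = (\<integral>\<^sup>+x. \<integral>\<^sup>+y. \<integral>\<^sup>+\<omega>. g \<omega> x y \<partial>measure_pmf Q \<partial>count_space UNIV \<partial>count_space UNIV)"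
    by (intro nn_integral_cong nn_integral_count_space_nn_integral) auto
  finally show ?thesis .
qed

(* The bounds a and b only serve to make the cross term finite, so that it can be cancelled. *)
lemma nn_integral_square_diff_le:
  fixes Q :: "'b pmf" and u v :: "'b \<Rightarrow> 'a::countable \<Rightarrow> ennreal" and A B :: "'b \<Rightarrow> real"
  assumes u: "\<And>\<omega>. (\<integral>\<^sup>+x. u \<omega> x \<partial>count_space UNIV) = ennreal (A \<omega>)"
    and v: "\<And>\<omega>. (\<integral>\<^sup>+x. v \<omega> x \<partial>count_space UNIV) = ennreal (B \<omega>)"
    and A: "\<And>\<omega>. 0 \<le> A \<omega>" "\<And>\<omega>. A \<omega> \<le> a"
    and B: "\<And>\<omega>. 0 \<le> B \<omega>" "\<And>\<omega>. B \<omega> \<le> b"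
    and pairwise: "\<And>x y. (\<integral>\<^sup>+\<omega>. u \<omega> x * u \<omega> y + v \<omega> x * v \<omega> y \<partial>Q)
                          \<le> (\<integral>\<^sup>+\<omega>. u \<omega> x * v \<omega> y + v \<omega> x * u \<omega> y \<partial>Q) + k x y"
  shows "(\<integral>\<^sup>+\<omega>. ennreal ((A \<omega> - B \<omega>)\<^sup>2) \<partial>Q)
           \<le> (\<integral>\<^sup>+x. \<integral>\<^sup>+y. k x y \<partial>count_space UNIV \<partial>count_space UNIV)"
proof -
  define same cross where
    "same \<omega> x y = u \<omega> x * u \<omega> y + v \<omega> x * v \<omega> y" and
    "cross \<omega> x y = u \<omega> x * v \<omega> y + v \<omega> x * u \<omega> y" for \<omega> x y
  let ?\<Sigma>\<Sigma> = "\<lambda>f. \<integral>\<^sup>+x. \<integral>\<^sup>+y. f x y \<partial>count_space UNIV \<partial>count_space UNIV"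
  have same_eq: "?\<Sigma>\<Sigma> (same \<omega>) = ennreal (A \<omega>) * ennreal (A \<omega>) + ennreal (B \<omega>) * ennreal (B \<omega>)" for \<omega>
    unfolding same_def nn_integral_count_space_sum_products u v ..
  have cross_eq: "?\<Sigma>\<Sigma> (cross \<omega>) = ennreal (A \<omega>) * ennreal (B \<omega>) + ennreal (B \<omega>) * ennreal (A \<omega>)" for \<omega>
    unfolding cross_def nn_integral_count_space_sum_products u v ..
  let ?D = "\<integral>\<^sup>+\<omega>. ennreal ((A \<omega> - B \<omega>)\<^sup>2) \<partial>Q"
  let ?C = "\<integral>\<^sup>+\<omega>. ?\<Sigma>\<Sigma> (cross \<omega>) \<partial>Q"
  have "?C + ?D = ?D + ?C"
    by (rule add.commute)
  also have "\<dots> = (\<integral>\<^sup>+\<omega>. ennreal ((A \<omega> - B \<omega>)\<^sup>2) + ?\<Sigma>\<Sigma> (cross \<omega>) \<partial>Q)"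
    by (rule nn_integral_add[symmetric]) auto
  also have "\<dots> = (\<integral>\<^sup>+\<omega>. ?\<Sigma>\<Sigma> (same \<omega>) \<partial>Q)"
    by (intro nn_integral_cong) (simp add: same_eq cross_eq ennreal_square_diff_add A B)
  also have "\<dots> = ?\<Sigma>\<Sigma> (\<lambda>x y. \<integral>\<^sup>+\<omega>. same \<omega> x y \<partial>Q)"
    by (rule nn_integral_pmf_count_space_swap)
  also have "\<dots> \<le> ?\<Sigma>\<Sigma> (\<lambda>x y. (\<integral>\<^sup>+\<omega>. cross \<omega> x y \<partial>Q) + k x y)"
    unfolding same_def cross_def by (intro nn_integral_mono pairwise)
  also have "\<dots> = ?C + ?\<Sigma>\<Sigma> k"
    by (simp add: nn_integral_add nn_integral_pmf_count_space_swap)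
  finally have le: "?C + ?D \<le> ?C + ?\<Sigma>\<Sigma> k" .
  have "?C \<le> (\<integral>\<^sup>+\<omega>. ennreal (2 * a * b) \<partial>Q)"
  proof (intro nn_integral_mono)
    fix \<omega>
    have "A \<omega> * B \<omega> \<le> a * b"
      using A B order_trans[OF A(1) A(2)] by (intro mult_mono) auto
    then have "A \<omega> * B \<omega> + B \<omega> * A \<omega> \<le> 2 * a * b"
      by (simp add: mult.commute)
    then show "?\<Sigma>\<Sigma> (cross \<omega>) \<le> ennreal (2 * a * b)"
      using A B by (simp add: cross_eq ennreal_plus[symmetric] ennreal_mult[symmetric] ennreal_leI)
  qed
  then have "?C \<noteq> \<infinity>"
    by (auto simp: top_unique measure_pmf.emeasure_space_1)
  moreover have "?C = \<infinity> \<or> ?D \<le> ?\<Sigma>\<Sigma> k"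
    using le by (rule ennreal_add_left_cancel_le[THEN iffD1])
  ultimately show ?thesis
    by blast
qed


section \<open>Mean squared error of the Good-Turing estimator\<close>

lemma GT_diagonal_le:
  fixes p :: real
  assumes "0 \<le> p" "p \<le> 1" "1 \<le> \<alpha>" "2 * \<alpha> \<le> n"
  defines "c \<equiv> 1 / real (n choose \<alpha>)"
  shows "c * (p ^ \<alpha> * (1 - p) ^ (n - \<alpha>)) + p ^ (2 * \<alpha>) * (1 - p) ^ n
           \<le> (peak_bound n (\<alpha> - 1) * c + peak_bound n (2 * \<alpha> - 1)) * p"
proof -
  have "p ^ (\<alpha> - 1) * (1 - p) ^ (n - \<alpha>) \<le> peak_bound n (\<alpha> - 1)"
    using assms by (intro power_mult_one_minus_power_le_peak_bound) auto
  then have "c * (p * (p ^ (\<alpha> - 1) * (1 - p) ^ (n - \<alpha>))) \<le> c * (p * peak_bound n (\<alpha> - 1))"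
    using assms by (intro mult_left_mono) (auto simp: c_def)
  moreover have "p * (p ^ (2 * \<alpha> - 1) * (1 - p) ^ n) \<le> p * peak_bound n (2 * \<alpha> - 1)"
    using assms by (intro mult_left_mono power_mult_one_minus_power_le_peak_bound) auto
  moreover have "p ^ \<alpha> = p * p ^ (\<alpha> - 1)" "p ^ (2 * \<alpha>) = p * p ^ (2 * \<alpha> - 1)"
    using assms by (simp_all flip: power_Suc)
  ultimately show ?thesis
    by (simp add: algebra_simps)
qed

lemma GT_off_diagonal_le:
  fixes p q :: real
  assumes "0 \<le> p" "0 \<le> q" "p + q \<le> 1" "1 \<le> \<alpha>" "4 * \<alpha> \<le> n"
  defines "r \<equiv> 1 - p - q"
  shows "p ^ \<alpha> * q ^ \<alpha> * r ^ (n - 2 * \<alpha>) + p ^ \<alpha> * q ^ \<alpha> * r ^ n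
           \<le> 2 * (p ^ \<alpha> * q ^ \<alpha> * r ^ (n - \<alpha>))
             + 4 * real \<alpha> ^ 2 * peak_bound n (\<alpha> - 1) * peak_bound n (\<alpha> + 1) * p * q"
proof -
  define m where "m = n - 2 * \<alpha>"
  have n: "n = m + 2 * \<alpha>" "n - \<alpha> = m + \<alpha>" "n \<le> 2 * m" "0 < n"
    using assms by (auto simp: m_def)
  have "r ^ n = r ^ m * r ^ \<alpha> * r ^ \<alpha>" "r ^ (n - \<alpha>) = r ^ m * r ^ \<alpha>"
    by (simp_all add: n power_add mult_2)
  then have "r ^ m + r ^ n - 2 * r ^ (n - \<alpha>) = r ^ m * (1 - r ^ \<alpha>)\<^sup>2"
    by (simp add: power2_eq_square algebra_simps)
  also have "\<dots> \<le> (\<alpha> * (p + q))\<^sup>2 * ((1 - p) * (1 - q)) ^ m"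
    unfolding r_def using assms by (intro one_minus_power_sq_le) auto
  finally have "p ^ \<alpha> * q ^ \<alpha> * (r ^ m + r ^ n - 2 * r ^ (n - \<alpha>))
      \<le> p ^ \<alpha> * q ^ \<alpha> * ((\<alpha> * (p + q))\<^sup>2 * ((1 - p) * (1 - q)) ^ m)"
    using assms by (intro mult_left_mono) auto
  also have "\<dots> = \<alpha>\<^sup>2 * (p ^ \<alpha> * q ^ \<alpha> * (p + q)\<^sup>2 * ((1 - p) * (1 - q)) ^ m)"
    by (simp add: power_mult_distrib)
  also have "\<dots> \<le> \<alpha>\<^sup>2 * (4 * peak_bound n (\<alpha> - 1) * peak_bound n (\<alpha> + 1) * p * q)"
  proof (intro mult_left_mono)
    obtain k where k: "\<alpha> = Suc k" using assms by (cases \<alpha>) auto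
    have "t ^ k * (1 - t) ^ m \<le> peak_bound n k"
      and "t ^ (k + 2) * (1 - t) ^ m \<le> peak_bound n (k + 2)" if "0 \<le> t" "t \<le> 1" for t
      using that n by (intro power_mult_one_minus_power_le_peak_bound; simp)+
    then show "p ^ \<alpha> * q ^ \<alpha> * (p + q)\<^sup>2 * ((1 - p) * (1 - q)) ^ m
        \<le> 4 * peak_bound n (\<alpha> - 1) * peak_bound n (\<alpha> + 1) * p * q"
      using assms power_pair_sum_sq_le[of p q k m] by (simp add: k)
  qed simp
  finally show ?thesis
    by (simp add: m_def algebra_simps)
qed

lemma GT_pair_moment_le:
  fixes P :: "'a pmf" and x y :: 'a
  assumes "1 \<le> \<alpha>" "4 * \<alpha> \<le> n"
  defines "c \<equiv> 1 / real (n choose \<alpha>)" and "p \<equiv> pmf P x" and "q \<equiv> pmf P y"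
    and "Pr \<equiv> \<lambda>a b. measure_pmf.prob (sample_pmf P n) {xs. occ n xs x = a \<and> occ n xs y = b}"
  shows "c * c * Pr \<alpha> \<alpha> + p ^ \<alpha> * q ^ \<alpha> * Pr 0 0
           \<le> c * q ^ \<alpha> * Pr \<alpha> 0 + p ^ \<alpha> * c * Pr 0 \<alpha>
             + ((peak_bound n (\<alpha> - 1) * c + peak_bound n (2 * \<alpha> - 1)) * p * of_bool (x = y)
                + 4 * real \<alpha> ^ 2 * peak_bound n (\<alpha> - 1) * peak_bound n (\<alpha> + 1) * p * q)"
proof -
  have C: "real (n choose \<alpha>) > 0" "c * real (n choose \<alpha>) = 1"
    using assms by (simp_all add: c_def)
  have K: "0 \<le> 4 * real \<alpha> ^ 2 * peak_bound n (\<alpha> - 1) * peak_bound n (\<alpha> + 1) * p * q"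
    by (simp add: peak_bound_def p_def q_def)
  show ?thesis
  proof (cases "x = y")
    case True
    have "c * c * Pr \<alpha> \<alpha> = (c * real (n choose \<alpha>)) * (c * (p ^ \<alpha> * (1 - p) ^ (n - \<alpha>)))"
      using True by (simp add: Pr_def p_def prob_occ_eq mult_ac)
    then have same_\<alpha>: "c * c * Pr \<alpha> \<alpha> = c * (p ^ \<alpha> * (1 - p) ^ (n - \<alpha>))"
      using C by simp
    have same_0: "p ^ \<alpha> * q ^ \<alpha> * Pr 0 0 = p ^ (2 * \<alpha>) * (1 - p) ^ n"
      using True by (simp add: Pr_def p_def q_def prob_occ_eq mult_2 power_add)
    have "{xs. occ n xs y = \<alpha> \<and> occ n xs y = 0} = {}"
      and "{xs. occ n xs y = 0 \<and> occ n xs y = \<alpha>} = {}"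
      using assms by auto
    then have mixed: "Pr \<alpha> 0 = 0" "Pr 0 \<alpha> = 0"
      unfolding Pr_def True by (simp_all only: measure_empty)
    have "c * (p ^ \<alpha> * (1 - p) ^ (n - \<alpha>)) + p ^ (2 * \<alpha>) * (1 - p) ^ n
        \<le> (peak_bound n (\<alpha> - 1) * c + peak_bound n (2 * \<alpha> - 1)) * p"
      unfolding c_def using assms by (intro GT_diagonal_le) (auto simp: p_def pmf_le_1)
    then show ?thesis
      unfolding same_\<alpha> same_0 mixed using True K by (simp add: mult_ac)
  next
    case False
    define r where "r = 1 - p - q"
    have pq: "0 \<le> p" "0 \<le> q" "p + q \<le> 1"
      using pmf_add_pmf_le_1[OF False] by (simp_all add: p_def q_def)
    have "c * c * Pr \<alpha> \<alpha>
        \<le> c * c * (real (n choose \<alpha>) * real (n choose \<alpha>) * (p ^ \<alpha> * q ^ \<alpha> * r ^ (n - 2 * \<alpha>)))"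
      using prob_occ_pair_le[OF False]
      by (intro mult_left_mono) (simp_all add: Pr_def p_def q_def r_def c_def mult_2)
    also have "\<dots> = (c * real (n choose \<alpha>)) * (c * real (n choose \<alpha>)) * (p ^ \<alpha> * q ^ \<alpha> * r ^ (n - 2 * \<alpha>))"
      by (simp only: mult_ac)
    finally have same_\<alpha>: "c * c * Pr \<alpha> \<alpha> \<le> p ^ \<alpha> * q ^ \<alpha> * r ^ (n - 2 * \<alpha>)"
      using C by simp
    have same_0: "p ^ \<alpha> * q ^ \<alpha> * Pr 0 0 = p ^ \<alpha> * q ^ \<alpha> * r ^ n"
      using False by (simp add: Pr_def p_def q_def r_def prob_occ_pair_eq)
    have mixed: "c * q ^ \<alpha> * Pr \<alpha> 0 + p ^ \<alpha> * c * Pr 0 \<alpha>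
        = 2 * (c * real (n choose \<alpha>)) * (p ^ \<alpha> * q ^ \<alpha> * r ^ (n - \<alpha>))"
      using False by (simp add: Pr_def p_def q_def r_def prob_occ_pair_eq algebra_simps)
    have "p ^ \<alpha> * q ^ \<alpha> * r ^ (n - 2 * \<alpha>) + p ^ \<alpha> * q ^ \<alpha> * r ^ n
        \<le> 2 * (p ^ \<alpha> * q ^ \<alpha> * r ^ (n - \<alpha>))
          + 4 * real \<alpha> ^ 2 * peak_bound n (\<alpha> - 1) * peak_bound n (\<alpha> + 1) * p * q"
      unfolding r_def using pq assms by (intro GT_off_diagonal_le) auto
    moreover have "of_bool (x = y) = (0 :: real)"
      using False by simp
    ultimately show ?thesis
      unfolding same_0 mixed C(2) using same_\<alpha> by simp
  qed
qed

lemma nn_integral_of_bool_combination: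
  fixes Q :: "'b pmf"
  assumes "0 \<le> a" "0 \<le> b"
  shows "(\<integral>\<^sup>+\<omega>. ennreal a * of_bool (E \<omega>) + ennreal b * of_bool (F \<omega>) \<partial>Q)
           = ennreal (a * measure_pmf.prob Q {\<omega>. E \<omega>} + b * measure_pmf.prob Q {\<omega>. F \<omega>})"
proof -
  have "(\<integral>\<^sup>+\<omega>. of_bool (G \<omega>) \<partial>Q) = ennreal (measure_pmf.prob Q {\<omega>. G \<omega>})" for G
    using nn_integral_indicator[of "{\<omega>. G \<omega>}" "measure_pmf Q"]
    by (simp add: of_bool_def indicator_def measure_pmf.emeasure_eq_measure)
  then show ?thesis
    using assms by (simp add: nn_integral_add nn_integral_cmult ennreal_mult' ennreal_plus)
qed

lemma GT_pairwise_le: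
  fixes P :: "'a pmf" and x y :: 'a
  assumes "1 \<le> \<alpha>" "4 * \<alpha> \<le> n"
  defines "u \<equiv> GT_summand \<alpha> n" and "v \<equiv> \<lambda>\<omega>. missing_mass_summand \<alpha> n \<omega> P"
    and "c \<equiv> 1 / real (n choose \<alpha>)"
  shows "(\<integral>\<^sup>+\<omega>. u \<omega> x * u \<omega> y + v \<omega> x * v \<omega> y \<partial>sample_pmf P n)
           \<le> (\<integral>\<^sup>+\<omega>. u \<omega> x * v \<omega> y + v \<omega> x * u \<omega> y \<partial>sample_pmf P n)
             + ennreal ((peak_bound n (\<alpha> - 1) * c + peak_bound n (2 * \<alpha> - 1)) * pmf P x * of_bool (x = y)
                 + 4 * real \<alpha> ^ 2 * peak_bound n (\<alpha> - 1) * peak_bound n (\<alpha> + 1) * pmf P x * pmf P y)"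
    (is "_ \<le> _ + ennreal ?k")
proof -
  let ?Pr = "\<lambda>a b. measure_pmf.prob (sample_pmf P n) {\<omega>. occ n \<omega> x = a \<and> occ n \<omega> y = b}"
  have prod: "(ennreal s * of_bool A) * (ennreal t * of_bool B) = ennreal (s * t) * of_bool (A \<and> B)"
    if "0 \<le> s" for s t A B
    using that by (simp add: ennreal_mult' mult_ac)
  have c: "0 \<le> c" by (simp add: c_def)
  have "(\<integral>\<^sup>+\<omega>. u \<omega> x * u \<omega> y + v \<omega> x * v \<omega> y \<partial>sample_pmf P n)
      = ennreal (c * c * ?Pr \<alpha> \<alpha> + pmf P x ^ \<alpha> * pmf P y ^ \<alpha> * ?Pr 0 0)"
    unfolding u_def v_def GT_summand_def missing_mass_summand_def c_def[symmetric]
    using c by (simp add: prod nn_integral_of_bool_combination)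
  also have "\<dots> \<le> ennreal (c * pmf P y ^ \<alpha> * ?Pr \<alpha> 0 + pmf P x ^ \<alpha> * c * ?Pr 0 \<alpha> + ?k)"
    unfolding c_def by (intro ennreal_leI GT_pair_moment_le assms)
  also have "\<dots> = ennreal (c * pmf P y ^ \<alpha> * ?Pr \<alpha> 0 + pmf P x ^ \<alpha> * c * ?Pr 0 \<alpha>) + ennreal ?k"
    using c by (intro ennreal_plus) (auto simp: peak_bound_def)
  also have "ennreal (c * pmf P y ^ \<alpha> * ?Pr \<alpha> 0 + pmf P x ^ \<alpha> * c * ?Pr 0 \<alpha>)
      = (\<integral>\<^sup>+\<omega>. u \<omega> x * v \<omega> y + v \<omega> x * u \<omega> y \<partial>sample_pmf P n)"
    unfolding u_def v_def GT_summand_def missing_mass_summand_def c_def[symmetric]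
    using c by (simp add: prod nn_integral_of_bool_combination)
  finally show ?thesis .
qed

lemma nn_integral_pmf_diagonal_plus_product:
  assumes "0 \<le> a" "0 \<le> b"
  shows "(\<integral>\<^sup>+x. \<integral>\<^sup>+y. ennreal (a * pmf P x * of_bool (x = y) + b * pmf P x * pmf P y)
            \<partial>count_space UNIV \<partial>count_space UNIV) = ennreal (a + b)"
proof -
  have total: "(\<integral>\<^sup>+y. ennreal (pmf P y) \<partial>count_space UNIV) = 1"
    by (simp add: nn_integral_pmf measure_pmf.emeasure_space_1)
  have "(\<integral>\<^sup>+y. ennreal (a * pmf P x * of_bool (x = y) + b * pmf P x * pmf P y) \<partial>count_space UNIV)
      = ennreal (a + b) * ennreal (pmf P x)" for x
  proof -
    have "(\<integral>\<^sup>+y. ennreal (a * pmf P x * of_bool (x = y) + b * pmf P x * pmf P y) \<partial>count_space UNIV)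
        = (\<integral>\<^sup>+y. ennreal (a * pmf P x) * indicator {x} y + ennreal (b * pmf P x) * ennreal (pmf P y)
            \<partial>count_space UNIV)"
      using assms by (intro nn_integral_cong) (auto simp: ennreal_plus ennreal_mult' indicator_def)
    also have "\<dots> = ennreal (a * pmf P x) + ennreal (b * pmf P x)"
      by (simp add: nn_integral_add nn_integral_cmult total)
    finally show ?thesis
      using assms by (simp add: ennreal_plus ennreal_mult' distrib_right)
  qed
  then show ?thesis
    by (simp add: nn_integral_cmult total)
qed

definition GT_mse_bound :: "nat \<Rightarrow> nat \<Rightarrow> real" where
  "GT_mse_bound \<alpha> n = peak_bound n (\<alpha> - 1) / real (n choose \<alpha>) + peak_bound n (2 * \<alpha> - 1)
     + 4 * real \<alpha> ^ 2 * peak_bound n (\<alpha> - 1) * peak_bound n (\<alpha> + 1)"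

lemma GT_mean_square_error_le:
  fixes P :: "'a::countable pmf"
  assumes "1 \<le> \<alpha>" "4 * \<alpha> \<le> n"
  shows "(\<integral>\<^sup>+\<omega>. ennreal ((GT_est \<alpha> n \<omega> - missing_mass \<alpha> n \<omega> P)\<^sup>2) \<partial>sample_pmf P n)
           \<le> ennreal (GT_mse_bound \<alpha> n)"
proof -
  have pos: "0 < \<alpha>" using assms by simp
  have "(\<integral>\<^sup>+\<omega>. ennreal ((GT_est \<alpha> n \<omega> - missing_mass \<alpha> n \<omega> P)\<^sup>2) \<partial>sample_pmf P n)
      \<le> (\<integral>\<^sup>+x. \<integral>\<^sup>+y. ennreal
            ((peak_bound n (\<alpha> - 1) * (1 / real (n choose \<alpha>)) + peak_bound n (2 * \<alpha> - 1))
               * pmf P x * of_bool (x = y)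
             + 4 * real \<alpha> ^ 2 * peak_bound n (\<alpha> - 1) * peak_bound n (\<alpha> + 1) * pmf P x * pmf P y)
          \<partial>count_space UNIV \<partial>count_space UNIV)"
  proof (rule nn_integral_square_diff_le[where a = "real n / real (n choose \<alpha>)" and b = 1])
    show "(\<integral>\<^sup>+x. GT_summand \<alpha> n \<omega> x \<partial>count_space UNIV) = ennreal (GT_est \<alpha> n \<omega>)"
      and "(\<integral>\<^sup>+x. missing_mass_summand \<alpha> n \<omega> P x \<partial>count_space UNIV) = ennreal (missing_mass \<alpha> n \<omega> P)"
      and "GT_est \<alpha> n \<omega> \<le> real n / real (n choose \<alpha>)" and "missing_mass \<alpha> n \<omega> P \<le> 1"
      for \<omega>
      using pos
      by (simp_all add: ennreal_GT_est_eq ennreal_missing_mass_eq GT_est_le missing_mass_le_1)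
  qed (rule GT_pairwise_le[OF assms] | simp add: GT_est_nonneg missing_mass_nonneg)+
  also have "\<dots> = ennreal (GT_mse_bound \<alpha> n)"
    by (subst nn_integral_pmf_diagonal_plus_product) (auto simp: GT_mse_bound_def peak_bound_def)
  finally show ?thesis .
qed

lemma GT_mse_bound_le_power:
  assumes "1 \<le> \<alpha>"
  shows "\<exists>C. \<forall>n \<ge> 4 * \<alpha>. GT_mse_bound \<alpha> n \<le> C / real n ^ (2 * \<alpha> - 1)"
proof -
  define c1 c2 c3 where "c1 = (2 * real (\<alpha> - 1)) ^ (\<alpha> - 1)"
    and "c2 = (2 * real (2 * \<alpha> - 1)) ^ (2 * \<alpha> - 1)" and "c3 = (2 * real (\<alpha> + 1)) ^ (\<alpha> + 1)"
  have "GT_mse_bound \<alpha> n \<le> (c1 * real \<alpha> ^ \<alpha> + c2 + 4 * real \<alpha> ^ 2 * c1 * c3) / real n ^ (2 * \<alpha> - 1)"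
    if n: "4 * \<alpha> \<le> n" for n
  proof -
    define N where "N = real n"
    have N: "1 \<le> N" using n assms by (simp add: N_def)
    have c: "0 \<le> c1" "0 \<le> c3" by (simp_all add: c1_def c3_def)
    have "\<alpha> - 1 + \<alpha> = 2 * \<alpha> - 1" "\<alpha> - 1 + (\<alpha> + 1) = Suc (2 * \<alpha> - 1)"
      using assms by arith+
    then have powers: "N ^ (\<alpha> - 1) * N ^ \<alpha> = N ^ (2 * \<alpha> - 1)"
      "N ^ (\<alpha> - 1) * N ^ (\<alpha> + 1) = N * N ^ (2 * \<alpha> - 1)"
      by (simp_all only: flip: power_add power_Suc)
    have "(N / real \<alpha>) ^ \<alpha> \<le> real (n choose \<alpha>)"
      unfolding N_def using n by (intro binomial_ge_n_over_k_pow_k) auto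
    moreover have "0 < real (n choose \<alpha>)"
      using n by simp
    ultimately have "1 / real (n choose \<alpha>) \<le> real \<alpha> ^ \<alpha> / N ^ \<alpha>"
      using assms N by (simp add: field_simps power_divide)
    then have "c1 / N ^ (\<alpha> - 1) * (1 / real (n choose \<alpha>)) \<le> c1 / N ^ (\<alpha> - 1) * (real \<alpha> ^ \<alpha> / N ^ \<alpha>)"
      using c N by (intro mult_left_mono) auto
    moreover have "peak_bound n (\<alpha> - 1) = c1 / N ^ (\<alpha> - 1)"
      by (simp add: peak_bound_def c1_def N_def power_divide)
    ultimately have "peak_bound n (\<alpha> - 1) / real (n choose \<alpha>) \<le> c1 / N ^ (\<alpha> - 1) * (real \<alpha> ^ \<alpha> / N ^ \<alpha>)"
      by simp
    also have "\<dots> = c1 * real \<alpha> ^ \<alpha> / N ^ (2 * \<alpha> - 1)"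
      unfolding powers(1)[symmetric] by simp
    finally have t1: "peak_bound n (\<alpha> - 1) / real (n choose \<alpha>) \<le> c1 * real \<alpha> ^ \<alpha> / N ^ (2 * \<alpha> - 1)" .
    have t2: "peak_bound n (2 * \<alpha> - 1) = c2 / N ^ (2 * \<alpha> - 1)"
      by (simp add: peak_bound_def c2_def N_def power_divide)
    have "4 * real \<alpha> ^ 2 * peak_bound n (\<alpha> - 1) * peak_bound n (\<alpha> + 1)
        = 4 * real \<alpha> ^ 2 * c1 * c3 / (N * N ^ (2 * \<alpha> - 1))"
      unfolding powers(2)[symmetric] by (simp add: peak_bound_def c1_def c3_def N_def power_divide)
    also have "\<dots> \<le> 4 * real \<alpha> ^ 2 * c1 * c3 / N ^ (2 * \<alpha> - 1)"
      using c N by (intro divide_left_mono) (auto simp: mult_le_cancel_right1)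
    finally show ?thesis
      using t1 t2 by (simp add: GT_mse_bound_def N_def add_divide_distrib)
  qed
  then show ?thesis by blast
qed

theorem lemma2:
  fixes \<alpha> :: nat
  assumes "\<alpha> \<ge> 1"
  shows "\<exists>C::real. \<forall>\<^sub>F n in sequentially.
           GT_risk TYPE('a::countable) \<alpha> n \<le> ennreal (C / real n ^ (2 * \<alpha> - 1))"
proof -
  obtain C where C: "\<And>n. 4 * \<alpha> \<le> n \<Longrightarrow> GT_mse_bound \<alpha> n \<le> C / real n ^ (2 * \<alpha> - 1)"
    using GT_mse_bound_le_power[OF assms] by blast
  have "GT_risk TYPE('a) \<alpha> n \<le> ennreal (C / real n ^ (2 * \<alpha> - 1))" if n: "4 * \<alpha> \<le> n" for n
    unfolding GT_risk_def
  proof (rule SUP_least)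
    fix P :: "'a pmf"
    have "(\<integral>\<^sup>+\<omega>. ennreal ((GT_est \<alpha> n \<omega> - missing_mass \<alpha> n \<omega> P)\<^sup>2) \<partial>sample_pmf P n)
        \<le> ennreal (GT_mse_bound \<alpha> n)"
      using assms n by (rule GT_mean_square_error_le)
    also have "\<dots> \<le> ennreal (C / real n ^ (2 * \<alpha> - 1))"
      using C[OF n] by (rule ennreal_leI)
    finally show "(\<integral>\<^sup>+\<omega>. ennreal ((GT_est \<alpha> n \<omega> - missing_mass \<alpha> n \<omega> P)\<^sup>2) \<partial>sample_pmf P n)
        \<le> ennreal (C / real n ^ (2 * \<alpha> - 1))" .
  qed
  then have "\<forall>\<^sub>F n in sequentially. GT_risk TYPE('a) \<alpha> n \<le> ennreal (C / real n ^ (2 * \<alpha> - 1))"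
    by (rule eventually_sequentiallyI)
  then show ?thesis ..
qed

end
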